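(* Let $lc_n$ be the number of linked cycles on $[n]$. Then $lc_1=1$, $lc_2=2$, and for all $n\ge3$, $$lc_n=(2n-3)lc_{n-1}+lc_{n-2}.$$
   Context: Two finite sets of integers $E,F$ are nearly disjoint if for every $i\in E\cap F$ either ($i=\min(E)$, $|E|>1$, $i\ne\min(F)$) or ($i=\min(F)$, $|F|>1$, $i\ne\min(E)$). A linked partition of $[n]$ is a set of nonempty subsets (blocks) of $[n]$ with union $[n]$, any two distinct blocks nearly disjoint. A linked cycle on $[n]$ is a linked partition of $[n]$ together with a cyclic arrangement of the elements of each block. *)

theory Defs
  imports Main
begin

definition nearly_disjoint :: "nat set \<Rightarrow> nat set \<Rightarrow> bool" where
  "nearly_disjoint E F \<longleftrightarrow>
     (\<forall>i\<in>E \<inter> F. (i = Min E \<and> card E > 1 \<and> i \<noteq> Min F) \<or>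
                  (i = Min F \<and> card F > 1 \<and> i \<noteq> Min E))"

definition linked_partition :: "nat \<Rightarrow> nat set set \<Rightarrow> bool" where
  "linked_partition n P \<longleftrightarrow>
     (\<forall>B\<in>P. B \<noteq> {} \<and> B \<subseteq> {1..n}) \<and> \<Union>P = {1..n} \<and>
     (\<forall>E\<in>P. \<forall>F\<in>P. E \<noteq> F \<longrightarrow> nearly_disjoint E F)"

text \<open>A cyclic arrangement of a finite set B, represented as a cyclic permutation of B
  (a bijection of B with a single orbit), extended by the identity outside B.\<close>
definition cyclic_arrangement :: "nat set \<Rightarrow> (nat \<Rightarrow> nat) \<Rightarrow> bool" where
  "cyclic_arrangement B c \<longleftrightarrow>
     bij_betw c B B \<and> (\<forall>x. x \<notin> B \<longrightarrow> c x = x) \<and>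
     (\<forall>x\<in>B. \<forall>y\<in>B. \<exists>k. (c ^^ k) x = y)"

definition linked_cycle :: "nat \<Rightarrow> (nat set \<times> (nat \<Rightarrow> nat)) set \<Rightarrow> bool" where
  "linked_cycle n S \<longleftrightarrow>
     linked_partition n (fst ` S) \<and> inj_on fst S \<and>
     (\<forall>(B, c)\<in>S. cyclic_arrangement B c)"

definition lc :: "nat \<Rightarrow> nat" where
  "lc n = card {S. linked_cycle n S}"

end

theory Submission
  imports Defs "HOL-Combinatorics.Cycles" "HOL-Combinatorics.Multiset_Permutations"
begin

(* A linked partition of [n] is encoded by its parent function: the parent of j is the minimum
   of the unique block in which j is not the minimum, or 0 if j is the minimum of every block
   containing it. The parent functions are exactly the functions p on [n] with p j < j, and the
   block with minimum m consists of m and its children. As a block B carries (|B| - 1)! cyclic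
   arrangements, lc n is the sum over all parent functions p of the product over m of
   (number of children of m)!.
   Choosing the parent y of n + 1 multiplies this weight by 1 if y = 0 and by one plus the number
   of children of y otherwise. Counting the weight by the number e of non-roots therefore gives
   the recurrence a (n+1) (e+1) = a n (e+1) + (n + e) a n e of the coefficients of the Bessel
   polynomials, so lc n = y_(n-1)(1), and the three-term recurrence of the Bessel polynomials
   at 1 is the claim. *)

section \<open>Bessel numbers\<close>

(* bessel_coeff (n + 1) e = (n + e)! / (2^e e! (n - e)!) is the coefficient of x^e in the
   Bessel polynomial y_n(x). *)
fun bessel_coeff :: "nat \<Rightarrow> nat \<Rightarrow> nat" where
  "bessel_coeff 0 e = (if e = 0 then 1 else 0)"
| "bessel_coeff (Suc n) 0 = 1"
| "bessel_coeff (Suc n) (Suc e) = bessel_coeff n (Suc e) + (n + e) * bessel_coeff n e"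

lemma bessel_coeff_0_right [simp]: "bessel_coeff n 0 = 1"
  by (cases n) simp_all

lemma bessel_coeff_eq_0: "n \<le> e \<Longrightarrow> 0 < e \<Longrightarrow> bessel_coeff n e = 0"
proof (induction n arbitrary: e)
  case (Suc n)
  then obtain e' where e': "e = Suc e'" "n \<le> e'"
    by (cases e) auto
  then show ?case
    using Suc.IH[of e] Suc.IH[of e'] by (cases e') simp_all
qed simp

(* bessel_coeff (n + 1) e / bessel_coeff n e = (n + e) / (n - e), stated without subtraction. *)
lemma bessel_coeff_ratio:
  "(n + e) * bessel_coeff n e + e * bessel_coeff (Suc n) e = n * bessel_coeff (Suc n) e"
proof (induction n arbitrary: e)
  case 0
  then show ?case by (cases e) simp_all
next
  case (Suc n)
  show ?case
  proof (cases e)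
    case (Suc e')
    have "(n + e) * ((n + e') * bessel_coeff n e' + e' * bessel_coeff (Suc n) e')
        = (n + e) * (n * bessel_coeff (Suc n) e')"
      using Suc.IH[of e'] by simp
    then show ?thesis using Suc.IH[of e] unfolding Suc by (simp add: algebra_simps)
  qed simp
qed

lemma bessel_coeff_three_term:
  "bessel_coeff (m + 2) (e + 1) = (2 * m + 1) * bessel_coeff (m + 1) e + bessel_coeff m (e + 1)"
proof (cases "e \<le> m")
  case True
  then show ?thesis
    using bessel_coeff_ratio[of m e] by (simp add: numeral_2_eq_2 algebra_simps)
next
  case False
  then show ?thesis
    using bessel_coeff_eq_0[of "m + 1" e] bessel_coeff_eq_0[of m "e + 1"] bessel_coeff_eq_0[of m e]
    by (simp add: numeral_2_eq_2)
qed

definition bessel_sum :: "nat \<Rightarrow> nat" where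
  "bessel_sum n = (\<Sum>e\<le>n. bessel_coeff n e)"

lemma bessel_sum_atMost:
  assumes "n \<le> k"
  shows "bessel_sum n = (\<Sum>e\<le>k. bessel_coeff n e)"
  unfolding bessel_sum_def
  by (rule sum.mono_neutral_left) (use assms bessel_coeff_eq_0 in auto)

lemma bessel_sum_three_term:
  "bessel_sum (m + 2) = (2 * m + 1) * bessel_sum (m + 1) + bessel_sum m"
proof -
  have shift: "bessel_sum k = 1 + (\<Sum>e\<le>m + 1. bessel_coeff k (e + 1))" if "k \<le> m + 2" for k
    using bessel_sum_atMost[OF that] by (simp add: sum.atMost_Suc_shift del: sum.atMost_Suc)
  have "bessel_sum (m + 2) = 1 + (\<Sum>e\<le>m + 1. bessel_coeff (m + 2) (e + 1))"
    by (rule shift) simp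
  also have "\<dots> = 1 + (\<Sum>e\<le>m + 1. (2 * m + 1) * bessel_coeff (m + 1) e + bessel_coeff m (e + 1))"
    by (simp only: bessel_coeff_three_term)
  also have "\<dots> = (2 * m + 1) * (\<Sum>e\<le>m + 1. bessel_coeff (m + 1) e) + (1 + (\<Sum>e\<le>m + 1. bessel_coeff m (e + 1)))"
    by (simp only: sum.distrib sum_distrib_left add_ac)
  also have "\<dots> = (2 * m + 1) * bessel_sum (m + 1) + bessel_sum m"
    using shift[of m] by (simp add: bessel_sum_def del: bessel_coeff.simps)
  finally show ?thesis .
qed

section \<open>Cyclic arrangements\<close>

definition cyclic_arrangements :: "nat set \<Rightarrow> (nat \<Rightarrow> nat) set" where
  "cyclic_arrangements B = {c. cyclic_arrangement B c}"

lemma funpow_cycle_of_list_nth: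
  assumes "distinct cs" "i < length cs"
  shows "(cycle_of_list cs ^^ k) (cs ! i) = cs ! ((k + i) mod length cs)"
proof -
  have "map (cycle_of_list cs ^^ k) cs ! i = rotate k cs ! i"
    using cyclic_rotation[OF assms(1)] by simp
  then show ?thesis using assms(2) by (simp add: nth_rotate)
qed

lemma cyclic_arrangement_cycle_of_list:
  assumes "distinct cs"
  shows "cyclic_arrangement (set cs) (cycle_of_list cs)"
  unfolding cyclic_arrangement_def
proof (intro conjI ballI allI impI)
  show "bij_betw (cycle_of_list cs) (set cs) (set cs)"
    by (rule permutes_imp_bij[OF cycle_permutes])
  show "cycle_of_list cs x = x" if "x \<notin> set cs" for x
    using that by (rule id_outside_supp)
  fix x y assume "x \<in> set cs" "y \<in> set cs"
  then obtain i j where ij: "i < length cs" "j < length cs" "x = cs ! i" "y = cs ! j"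
    by (metis in_set_conv_nth)
  have "(j + length cs - i + i) mod length cs = j"
    using ij(1,2) by simp
  then have "(cycle_of_list cs ^^ (j + length cs - i)) x = y"
    using funpow_cycle_of_list_nth[OF assms ij(1)] ij(3,4) by simp
  then show "\<exists>k. (cycle_of_list cs ^^ k) x = y" ..
qed

lemma cycle_of_list_Cons_inj:
  assumes "distinct (m # xs)" "distinct (m # ys)" "length xs = length ys"
    and "cycle_of_list (m # xs) = cycle_of_list (m # ys)"
  shows "xs = ys"
proof -
  have "m # xs = m # ys"
  proof (rule nth_equalityI)
    show "length (m # xs) = length (m # ys)"
      using assms(3) by simp
    fix i assume "i < length (m # xs)"
    then show "(m # xs) ! i = (m # ys) ! i"
      using funpow_cycle_of_list_nth[OF assms(1), of 0 i] funpow_cycle_of_list_nth[OF assms(2), of 0 i]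
        assms(3,4) by simp
  qed
  then show ?thesis by simp
qed

lemma cyclic_arrangement_eq_cycle_of_list:
  assumes "cyclic_arrangement B c" "m \<in> B" "finite B"
  obtains xs where "xs \<in> permutations_of_set (B - {m})" "c = cycle_of_list (m # xs)"
proof -
  have "c permutes B"
    using assms(1) unfolding cyclic_arrangement_def by (simp add: bij_imp_permutes)
  with assms(3) have perm: "permutation c"
    by (rule permutes_imp_permutation)
  define cs where "cs = support c m"
  have "(c ^^ k) m \<in> B" for k
    using \<open>c permutes B\<close> assms(2) by (simp add: permutes_in_image permutes_funpow)
  moreover have "\<exists>k. (c ^^ k) m = x" if "x \<in> B" for x
    using assms(1,2) that unfolding cyclic_arrangement_def by blast
  ultimately have set_cs: "set cs = B"
    unfolding cs_def support_set[OF perm] by blast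
  have "c = cycle_of_list cs"
  proof
    fix x
    show "c x = cycle_of_list cs x"
    proof (cases "x \<in> B")
      case True
      then show ?thesis
        using cycle_restrict[OF perm] set_cs unfolding cs_def by blast
    next
      case False
      then show ?thesis
        using assms(1) id_outside_supp[of x cs] set_cs unfolding cyclic_arrangement_def by simp
    qed
  qed
  moreover obtain xs where cs: "cs = m # xs"
  proof -
    have "cs \<noteq> []" "hd cs = m"
      using least_power_of_permutation(2)[OF perm] unfolding cs_def by (simp_all add: hd_map)
    then show ?thesis using that by (metis list.collapse)
  qed
  moreover have "xs \<in> permutations_of_set (B - {m})"
  proof
    have "distinct (m # xs)"
      using cycle_of_permutation[OF perm, of m] unfolding cs_def[symmetric] cs .
    then show "distinct xs" "set xs = B - {m}"
      using set_cs unfolding cs by auto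
  qed
  ultimately show ?thesis
    using that by blast
qed

lemma card_cyclic_arrangements:
  assumes "finite B" "B \<noteq> {}"
  shows "card (cyclic_arrangements B) = fact (card B - 1)"
proof -
  obtain m where m: "m \<in> B"
    using assms(2) by blast
  have "cyclic_arrangements B = (\<lambda>xs. cycle_of_list (m # xs)) ` permutations_of_set (B - {m})"
  proof (intro equalityI subsetI)
    fix c assume "c \<in> cyclic_arrangements B"
    then show "c \<in> (\<lambda>xs. cycle_of_list (m # xs)) ` permutations_of_set (B - {m})"
      using cyclic_arrangement_eq_cycle_of_list[OF _ m assms(1)]
      unfolding cyclic_arrangements_def by blast
  next
    fix c assume "c \<in> (\<lambda>xs. cycle_of_list (m # xs)) ` permutations_of_set (B - {m})"
    then obtain xs where xs: "xs \<in> permutations_of_set (B - {m})" and c: "c = cycle_of_list (m # xs)"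
      by blast
    have "distinct (m # xs)" "set (m # xs) = B"
      using permutations_of_setD[OF xs] m by auto
    then show "c \<in> cyclic_arrangements B"
      unfolding c cyclic_arrangements_def using cyclic_arrangement_cycle_of_list by fastforce
  qed
  moreover have "inj_on (\<lambda>xs. cycle_of_list (m # xs)) (permutations_of_set (B - {m}))"
  proof (rule inj_onI)
    fix xs ys
    assume "xs \<in> permutations_of_set (B - {m})" "ys \<in> permutations_of_set (B - {m})"
      and "cycle_of_list (m # xs) = cycle_of_list (m # ys)"
    then show "xs = ys"
      by (intro cycle_of_list_Cons_inj) (auto simp: permutations_of_set_def distinct_card[symmetric])
  qed
  ultimately show ?thesis
    using assms m by (simp add: card_image)
qed

section \<open>Linked cycles over a linked partition\<close>

lemma finite_linked_partitions: "finite {P. linked_partition n P}"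
proof (rule finite_subset)
  show "{P. linked_partition n P} \<subseteq> Pow (Pow {1..n})"
    unfolding linked_partition_def by auto
qed simp

lemma linked_partitionD:
  assumes "linked_partition n P"
  shows "finite P" and "B \<in> P \<Longrightarrow> finite B \<and> B \<noteq> {} \<and> B \<subseteq> {1..n}"
proof -
  have "P \<subseteq> Pow {1..n}"
    using assms unfolding linked_partition_def by auto
  then show "finite P"
    by (rule finite_subset) simp
  show "B \<in> P \<Longrightarrow> finite B \<and> B \<noteq> {} \<and> B \<subseteq> {1..n}"
    using assms finite_subset[of B "{1..n}"] unfolding linked_partition_def by auto
qed

lemma linked_cycles_eq_image:
  "{S. linked_cycle n S} =
     (\<lambda>(P, g). (\<lambda>B. (B, g B)) ` P) ` (SIGMA P:{P. linked_partition n P}. \<Pi>\<^sub>E B\<in>P. cyclic_arrangements B)"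
  (is "_ = ?graph ` ?Sigma")
proof (intro equalityI subsetI)
  fix S assume "S \<in> {S. linked_cycle n S}"
  then have LP: "linked_partition n (fst ` S)" and inj: "inj_on fst S"
    and cyc: "\<And>B c. (B, c) \<in> S \<Longrightarrow> cyclic_arrangement B c"
    unfolding linked_cycle_def by auto
  define g where "g = restrict (\<lambda>B. THE c. (B, c) \<in> S) (fst ` S)"
  have g: "g B = c" if "(B, c) \<in> S" for B c
  proof -
    have "(THE c. (B, c) \<in> S) = c"
      using that inj_onD[OF inj _ that] by (intro the_equality) auto
    then show ?thesis
      unfolding g_def using that by force
  qed
  have "g \<in> extensional (fst ` S)"
    unfolding g_def by simp
  then have "g \<in> (\<Pi>\<^sub>E B\<in>fst ` S. cyclic_arrangements B)"
    using g cyc by (auto simp: PiE_iff cyclic_arrangements_def)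
  moreover have "S = ?graph (fst ` S, g)"
    using g by force
  ultimately show "S \<in> ?graph ` ?Sigma"
    using LP by blast
next
  fix S assume "S \<in> ?graph ` ?Sigma"
  then obtain P g where "linked_partition n P" "g \<in> (\<Pi>\<^sub>E B\<in>P. cyclic_arrangements B)"
    and S: "S = (\<lambda>B. (B, g B)) ` P"
    by blast
  moreover have "fst ` S = P"
    unfolding S by force
  ultimately show "S \<in> {S. linked_cycle n S}"
    unfolding linked_cycle_def cyclic_arrangements_def inj_on_def by auto
qed

lemma inj_on_graphs: "inj_on (\<lambda>(P, g). (\<lambda>B. (B, g B)) ` P) (SIGMA P:\<P>. \<Pi>\<^sub>E B\<in>P. X B)"
proof (rule inj_onI, clarify)
  fix P g P' g'
  assume g: "g \<in> (\<Pi>\<^sub>E B\<in>P. X B)" and g': "g' \<in> (\<Pi>\<^sub>E B\<in>P'. X B)"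
    and eq: "(\<lambda>B. (B, g B)) ` P = (\<lambda>B. (B, g' B)) ` P'"
  have "P = P'"
    using arg_cong[OF eq, of "image fst"] by (simp add: image_image)
  moreover from this have "g = g'"
    using eq by (intro PiE_ext[OF g]) (use g' in auto)
  ultimately show "P = P' \<and> g = g'" ..
qed

lemma lc_eq_sum_linked_partitions:
  "lc n = (\<Sum>P | linked_partition n P. \<Prod>B\<in>P. fact (card B - 1))"
proof -
  have "card (\<Pi>\<^sub>E B\<in>P. cyclic_arrangements B) = (\<Prod>B\<in>P. fact (card B - 1))"
    if "linked_partition n P" for P
    using linked_partitionD[OF that]
    by (simp add: card_PiE card_cyclic_arrangements)
  moreover have "finite (\<Pi>\<^sub>E B\<in>P. cyclic_arrangements B)" if "linked_partition n P" for P
    using linked_partitionD[OF that] card_cyclic_arrangements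
    by (intro finite_PiE) (auto intro: card_ge_0_finite)
  ultimately show ?thesis
    unfolding lc_def linked_cycles_eq_image
    by (simp add: card_image[OF inj_on_graphs] finite_linked_partitions)
qed

section \<open>Parent functions\<close>

definition parent_functions :: "nat \<Rightarrow> (nat \<Rightarrow> nat) set" where
  "parent_functions n = (\<Pi>\<^sub>E j\<in>{1..n}. {..<j})"

definition children :: "nat \<Rightarrow> (nat \<Rightarrow> nat) \<Rightarrow> nat \<Rightarrow> nat set" where
  "children n p m = {j\<in>{1..n}. p j = m}"

definition family :: "nat \<Rightarrow> (nat \<Rightarrow> nat) \<Rightarrow> nat \<Rightarrow> nat set" where
  "family n p m = insert m (children n p m)"

(* A childless non-root lies only in the block of its parent and heads no block. *)
definition family_heads :: "nat \<Rightarrow> (nat \<Rightarrow> nat) \<Rightarrow> nat set" where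
  "family_heads n p = {m\<in>{1..n}. p m = 0 \<or> children n p m \<noteq> {}}"

definition partition_of :: "nat \<Rightarrow> (nat \<Rightarrow> nat) \<Rightarrow> nat set set" where
  "partition_of n p = family n p ` family_heads n p"

definition weight :: "nat \<Rightarrow> (nat \<Rightarrow> nat) \<Rightarrow> nat" where
  "weight n p = (\<Prod>m\<in>{1..n}. fact (card (children n p m)))"

lemma parent_functionsD: "p \<in> parent_functions n \<Longrightarrow> j \<in> {1..n} \<Longrightarrow> p j < j"
  unfolding parent_functions_def by auto

lemma children_subset:
  assumes "p \<in> parent_functions n"
  shows "children n p m \<subseteq> {m<..n}"
  using parent_functionsD[OF assms] unfolding children_def by fastforce

lemma finite_children [simp]: "finite (children n p m)"
  unfolding children_def by simp

lemma Min_family: "p \<in> parent_functions n \<Longrightarrow> Min (family n p m) = m"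
  unfolding family_def using children_subset[of p n m] by (intro Min_eqI) auto

lemma card_family: "p \<in> parent_functions n \<Longrightarrow> card (family n p m) = Suc (card (children n p m))"
  unfolding family_def using children_subset[of p n m] by (subst card_insert_disjoint) auto

lemma family_subset: "m \<in> family_heads n p \<Longrightarrow> family n p m \<subseteq> {1..n}"
  unfolding family_def children_def family_heads_def by auto

lemma family_eq_imp_eq:
  "p \<in> parent_functions n \<Longrightarrow> family n p a = family n p b \<Longrightarrow> a = b"
  using Min_family by metis

lemma Union_partition_of:
  assumes p: "p \<in> parent_functions n"
  shows "\<Union> (partition_of n p) = {1..n}"
proof
  show "\<Union> (partition_of n p) \<subseteq> {1..n}"
    using family_subset unfolding partition_of_def by blast
  show "{1..n} \<subseteq> \<Union> (partition_of n p)"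
  proof
    fix j assume j: "j \<in> {1..n}"
    show "j \<in> \<Union> (partition_of n p)"
    proof (cases "p j = 0")
      case True
      then have "j \<in> family_heads n p" "j \<in> family n p j"
        using j unfolding family_heads_def family_def by auto
      then show ?thesis unfolding partition_of_def by blast
    next
      case False
      then have "p j \<in> family_heads n p" "j \<in> family n p (p j)"
        using j parent_functionsD[OF p j] unfolding family_heads_def family_def children_def by auto
      then show ?thesis unfolding partition_of_def by blast
    qed
  qed
qed

lemma nearly_disjoint_families:
  assumes p: "p \<in> parent_functions n"
    and a: "a \<in> family_heads n p" and b: "b \<in> family_heads n p" and "a \<noteq> b"
  shows "nearly_disjoint (family n p a) (family n p b)"
  unfolding nearly_disjoint_def
proof
  have card_gt_1: "card (family n p m) > 1" if "m \<in> family_heads n p" "p m \<noteq> 0" for m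
    using that card_family[OF p, of m] unfolding family_heads_def by (auto simp: card_gt_0_iff)
  fix i assume "i \<in> family n p a \<inter> family n p b"
  then have "(i = a \<and> p a = b) \<or> (i = b \<and> p b = a)"
    using \<open>a \<noteq> b\<close> unfolding family_def children_def by auto
  moreover have "b \<noteq> 0" "a \<noteq> 0"
    using a b unfolding family_heads_def by auto
  ultimately show "(i = Min (family n p a) \<and> card (family n p a) > 1 \<and> i \<noteq> Min (family n p b)) \<or>
      (i = Min (family n p b) \<and> card (family n p b) > 1 \<and> i \<noteq> Min (family n p a))"
    using card_gt_1[OF a] card_gt_1[OF b] \<open>a \<noteq> b\<close> Min_family[OF p] by auto
qed

lemma linked_partition_partition_of:
  assumes p: "p \<in> parent_functions n"
  shows "linked_partition n (partition_of n p)"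
  unfolding linked_partition_def
proof (intro conjI)
  show "\<forall>B\<in>partition_of n p. B \<noteq> {} \<and> B \<subseteq> {1..n}"
    using family_subset unfolding partition_of_def family_def by blast
  show "\<Union> (partition_of n p) = {1..n}"
    using p by (rule Union_partition_of)
  show "\<forall>E\<in>partition_of n p. \<forall>F\<in>partition_of n p. E \<noteq> F \<longrightarrow> nearly_disjoint E F"
    unfolding partition_of_def using nearly_disjoint_families[OF p] by blast
qed

lemma parent_eq_if_partition_of_eq:
  assumes p: "p \<in> parent_functions n" and q: "q \<in> parent_functions n"
    and eq: "partition_of n p = partition_of n q" and j: "j \<in> {1..n}" "p j \<noteq> 0"
  shows "q j = p j"
proof -
  have "p j \<in> family_heads n p"
    using j parent_functionsD[OF p j(1)] unfolding family_heads_def children_def by auto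
  then have "family n p (p j) \<in> partition_of n q"
    using eq unfolding partition_of_def by blast
  then obtain m where "family n p (p j) = family n q m"
    unfolding partition_of_def by blast
  moreover from this have "m = p j"
    using Min_family[OF p, of "p j"] Min_family[OF q, of m] by simp
  moreover have "j \<in> family n p (p j)"
    using j unfolding family_def children_def by simp
  ultimately have "j \<in> family n q (p j)"
    by simp
  then show ?thesis
    using parent_functionsD[OF p j(1)] unfolding family_def children_def by auto
qed

lemma partition_of_inj: "inj_on (partition_of n) (parent_functions n)"
proof (rule inj_onI)
  fix p q assume p: "p \<in> parent_functions n" and q: "q \<in> parent_functions n"
    and eq: "partition_of n p = partition_of n q"
  show "p = q"
  proof (rule PiE_ext[OF p[unfolded parent_functions_def] q[unfolded parent_functions_def]])
    fix j assume j: "j \<in> {1..n}"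
    show "p j = q j"
    proof (cases "p j = 0")
      case True
      then show ?thesis
        using parent_eq_if_partition_of_eq[OF q p eq[symmetric] j] by (cases "q j = 0") simp_all
    next
      case False
      then show ?thesis
        using parent_eq_if_partition_of_eq[OF p q eq j] by simp
    qed
  qed
qed

lemma prod_partition_of:
  assumes p: "p \<in> parent_functions n"
  shows "(\<Prod>B\<in>partition_of n p. fact (card B - 1)) = weight n p"
proof -
  have "(\<Prod>B\<in>partition_of n p. fact (card B - 1)) = (\<Prod>m\<in>family_heads n p. fact (card (family n p m) - 1))"
    unfolding partition_of_def
    by (rule prod.reindex_cong[OF _ refl]) (auto intro: inj_onI family_eq_imp_eq[OF p])
  also have "\<dots> = (\<Prod>m\<in>family_heads n p. fact (card (children n p m)))"
    by (simp add: card_family[OF p])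
  also have "\<dots> = weight n p"
    unfolding weight_def
    by (rule prod.mono_neutral_left) (auto simp: family_heads_def)
  finally show ?thesis .
qed

definition linked_parent :: "nat \<Rightarrow> nat set set \<Rightarrow> nat \<Rightarrow> nat" where
  "linked_parent n P = (\<lambda>j\<in>{1..n}.
     if \<exists>B\<in>P. j \<in> B \<and> j \<noteq> Min B then Min (THE B. B \<in> P \<and> j \<in> B \<and> j \<noteq> Min B) else 0)"

context
  fixes n :: nat and P :: "nat set set"
  assumes LP: "linked_partition n P"
begin

private lemma block_Min: "B \<in> P \<Longrightarrow> Min B \<in> B \<and> 1 \<le> Min B \<and> B \<subseteq> {1..n}"
  using linked_partitionD(2)[OF LP] by fastforce

private lemma blocks_nearly_disjoint: "E \<in> P \<Longrightarrow> F \<in> P \<Longrightarrow> E \<noteq> F \<Longrightarrow> nearly_disjoint E F"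
  using LP unfolding linked_partition_def by blast

private lemma Min_block_inj:
  assumes "B \<in> P" "B' \<in> P" "Min B = Min B'"
  shows "B = B'"
proof (rule ccontr)
  assume "B \<noteq> B'"
  moreover have "Min B \<in> B \<inter> B'"
    using block_Min[OF assms(1)] block_Min[OF assms(2)] assms(3) by simp
  ultimately show False
    using blocks_nearly_disjoint[OF assms(1,2)] assms(3) unfolding nearly_disjoint_def by blast
qed

lemma linked_parent_eq:
  assumes "B \<in> P" "j \<in> B" "j \<noteq> Min B"
  shows "linked_parent n P j = Min B"
proof -
  have "(THE B. B \<in> P \<and> j \<in> B \<and> j \<noteq> Min B) = B"
  proof (rule the_equality)
    fix B' assume "B' \<in> P \<and> j \<in> B' \<and> j \<noteq> Min B'"
    then show "B' = B"
      using blocks_nearly_disjoint[of B' B] assms unfolding nearly_disjoint_def by blast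
  qed (use assms in simp)
  moreover have "j \<in> {1..n}"
    using block_Min[OF assms(1)] assms(2) by blast
  ultimately show ?thesis
    unfolding linked_parent_def using assms by auto
qed

lemma linked_parent_eq_0:
  assumes "j \<in> {1..n}" "\<And>B. B \<in> P \<Longrightarrow> j \<in> B \<Longrightarrow> j = Min B"
  shows "linked_parent n P j = 0"
  using assms unfolding linked_parent_def by auto

lemma linked_parent_neq_0E:
  assumes "j \<in> {1..n}" "linked_parent n P j \<noteq> 0"
  obtains B where "B \<in> P" "j \<in> B" "j \<noteq> Min B" "linked_parent n P j = Min B"
proof -
  obtain B where B: "B \<in> P" "j \<in> B" "j \<noteq> Min B"
    using assms unfolding linked_parent_def by (auto split: if_splits)
  show thesis
    by (rule that[OF B linked_parent_eq[OF B]])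
qed

lemma linked_parent_parent_functions: "linked_parent n P \<in> parent_functions n"
proof -
  have "linked_parent n P j < j" if "j \<in> {1..n}" for j
  proof (cases "linked_parent n P j = 0")
    case False
    with that obtain B where B: "B \<in> P" "j \<in> B" "j \<noteq> Min B" "linked_parent n P j = Min B"
      by (rule linked_parent_neq_0E)
    then have "Min B \<le> j"
      using linked_partitionD(2)[OF LP] by simp
    then show ?thesis
      using B(3,4) by simp
  qed (use that in simp)
  then show ?thesis
    unfolding parent_functions_def linked_parent_def by simp
qed

lemma family_linked_parent:
  assumes "B \<in> P"
  shows "family n (linked_parent n P) (Min B) = B"
proof (intro equalityI subsetI)
  fix j assume j: "j \<in> family n (linked_parent n P) (Min B)"
  show "j \<in> B"
  proof (cases "j = Min B")
    case False
    then have jn: "j \<in> {1..n}" and parent: "linked_parent n P j = Min B"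
      using j unfolding family_def children_def by auto
    have "linked_parent n P j \<noteq> 0"
      using block_Min[OF assms] unfolding parent by simp
    then obtain B' where B': "B' \<in> P" "j \<in> B'" "j \<noteq> Min B'" "linked_parent n P j = Min B'"
      by (rule linked_parent_neq_0E[OF jn])
    have "B' = B"
      using B'(4) parent by (intro Min_block_inj[OF B'(1) assms]) simp
    then show ?thesis
      using B'(2) by simp
  qed (use block_Min[OF assms] in simp)
next
  fix j assume "j \<in> B"
  then show "j \<in> family n (linked_parent n P) (Min B)"
    using linked_parent_eq[OF assms] block_Min[OF assms] unfolding family_def children_def by auto
qed

lemma family_head_linked_parent_is_Min:
  assumes m: "m \<in> family_heads n (linked_parent n P)"
  shows "m \<in> Min ` P"
proof -
  have "m \<in> {1..n}"
    using m by (simp add: family_heads_def)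
  then obtain B where B: "B \<in> P" "m \<in> B"
    using LP unfolding linked_partition_def by blast
  show ?thesis
  proof (cases "m = Min B")
    case False
    then have "linked_parent n P m \<noteq> 0"
      using linked_parent_eq[OF B False] block_Min[OF B(1)] by simp
    then obtain j where jn: "j \<in> {1..n}" and "linked_parent n P j = m"
      using m unfolding family_heads_def children_def by auto
    moreover from this have "linked_parent n P j \<noteq> 0"
      using \<open>m \<in> {1..n}\<close> by simp
    then obtain B' where "B' \<in> P" "j \<in> B'" "j \<noteq> Min B'" "linked_parent n P j = Min B'"
      by (rule linked_parent_neq_0E[OF jn])
    then show ?thesis
      using \<open>linked_parent n P j = m\<close> by blast
  qed (use B in blast)
qed

lemma Min_block_family_head:
  assumes B: "B \<in> P"
  shows "Min B \<in> family_heads n (linked_parent n P)"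
proof (cases "\<exists>j\<in>B. j \<noteq> Min B")
  case True
  then obtain j where "j \<in> B" "j \<noteq> Min B"
    by blast
  then have "j \<in> children n (linked_parent n P) (Min B)"
    using linked_parent_eq[OF B] block_Min[OF B] unfolding children_def by auto
  then show ?thesis
    using block_Min[OF B] unfolding family_heads_def by auto
next
  case False
  then obtain m where Bm: "B = {m}"
    using block_Min[OF B] by blast
  have "Min B = Min B'" if "B' \<in> P" "Min B \<in> B'" for B'
  proof (rule ccontr)
    assume "Min B \<noteq> Min B'"
    then have "B \<noteq> B'"
      by auto
    then show False
      using blocks_nearly_disjoint[OF B that(1)] that(2) unfolding nearly_disjoint_def Bm by auto
  qed
  then have "linked_parent n P (Min B) = 0"
    using block_Min[OF B] by (intro linked_parent_eq_0) auto
  then show ?thesis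
    using block_Min[OF B] unfolding family_heads_def by auto
qed

lemma partition_of_linked_parent: "partition_of n (linked_parent n P) = P"
proof -
  have "family_heads n (linked_parent n P) = Min ` P"
    using family_head_linked_parent_is_Min Min_block_family_head by blast
  moreover have "(\<lambda>B. family n (linked_parent n P) (Min B)) ` P = (\<lambda>B. B) ` P"
    by (rule image_cong[OF refl family_linked_parent])
  ultimately show ?thesis
    unfolding partition_of_def by (simp add: image_image)
qed

end

lemma partition_of_bij:
  "bij_betw (partition_of n) (parent_functions n) {P. linked_partition n P}"
  unfolding bij_betw_def
proof
  show "inj_on (partition_of n) (parent_functions n)"
    by (rule partition_of_inj)
  show "partition_of n ` parent_functions n = {P. linked_partition n P}"
  proof
    show "partition_of n ` parent_functions n \<subseteq> {P. linked_partition n P}"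
      using linked_partition_partition_of by blast
    show "{P. linked_partition n P} \<subseteq> partition_of n ` parent_functions n"
    proof
      fix P assume "P \<in> {P. linked_partition n P}"
      then have LP: "linked_partition n P" ..
      show "P \<in> partition_of n ` parent_functions n"
        using partition_of_linked_parent[OF LP, symmetric] linked_parent_parent_functions[OF LP]
        by (rule image_eqI)
    qed
  qed
qed

lemma sum_linked_partitions_eq_sum_weight:
  "(\<Sum>P | linked_partition n P. \<Prod>B\<in>P. fact (card B - 1)) = (\<Sum>p\<in>parent_functions n. weight n p)"
  unfolding sum.reindex_bij_betw[OF partition_of_bij, symmetric]
  by (rule sum.cong[OF refl]) (rule prod_partition_of)

section \<open>Counting by the number of non-roots\<close>

definition nonroots :: "nat \<Rightarrow> (nat \<Rightarrow> nat) \<Rightarrow> nat set" where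
  "nonroots n p = {j\<in>{1..n}. p j \<noteq> 0}"

definition graded_weight :: "nat \<Rightarrow> nat \<Rightarrow> nat" where
  "graded_weight n e = (\<Sum>p\<in>parent_functions n. if card (nonroots n p) = e then weight n p else 0)"

lemma parent_functions_Suc:
  "parent_functions (Suc n) = (\<lambda>(y, p). p(Suc n := y)) ` ({..n} \<times> parent_functions n)"
proof -
  have "{1..Suc n} = insert (Suc n) {1..n}"
    by auto
  then show ?thesis
    unfolding parent_functions_def by (simp add: PiE_insert_eq lessThan_Suc_atMost)
qed

lemma inj_on_parent_functions_Suc:
  "inj_on (\<lambda>(y, p). p(Suc n := y)) ({..n} \<times> parent_functions n)"
  using inj_combinator[of "Suc n" "{1..n}" lessThan]
  unfolding parent_functions_def by (simp add: lessThan_Suc_atMost)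

lemma children_fun_upd:
  "children (Suc n) (p(Suc n := y)) m =
     (if m = y then insert (Suc n) (children n p m) else children n p m)"
  unfolding children_def by auto

lemma card_nonroots_fun_upd:
  "card (nonroots (Suc n) (p(Suc n := y))) = (if y = 0 then 0 else 1) + card (nonroots n p)"
proof -
  have "nonroots (Suc n) (p(Suc n := y)) = (if y = 0 then nonroots n p else insert (Suc n) (nonroots n p))"
    unfolding nonroots_def by auto
  moreover have "finite (nonroots n p)" "Suc n \<notin> nonroots n p"
    unfolding nonroots_def by auto
  ultimately show ?thesis
    by simp
qed

lemma weight_fun_upd:
  assumes "p \<in> parent_functions n" "y \<le> n"
  shows "weight (Suc n) (p(Suc n := y)) = (if y = 0 then 1 else Suc (card (children n p y))) * weight n p"
proof -
  have "children (Suc n) (p(Suc n := y)) (Suc n) = {}"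
    using assms(2) children_subset[OF assms(1), of "Suc n"] unfolding children_fun_upd by auto
  then have "weight (Suc n) (p(Suc n := y)) = (\<Prod>m\<in>{1..n}. fact (card (children (Suc n) (p(Suc n := y)) m)))"
    unfolding weight_def by simp
  also have "\<dots> = (\<Prod>m\<in>{1..n}. (if m = y then Suc (card (children n p m)) else 1) * fact (card (children n p m)))"
  proof (rule prod.cong[OF refl])
    fix m
    have "Suc n \<notin> children n p m"
      unfolding children_def by simp
    then show "fact (card (children (Suc n) (p(Suc n := y)) m))
        = (if m = y then Suc (card (children n p m)) else 1) * fact (card (children n p m))"
      unfolding children_fun_upd by (cases "m = y") simp_all
  qed
  also have "\<dots> = (if y = 0 then 1 else Suc (card (children n p y))) * weight n p"
    unfolding weight_def prod.distrib using assms(2) by (simp add: prod.delta)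
  finally show ?thesis .
qed

lemma sum_card_children:
  assumes "p \<in> parent_functions n"
  shows "(\<Sum>m\<in>{1..n}. card (children n p m)) = card (nonroots n p)"
proof -
  have "nonroots n p = (\<Union>m\<in>{1..n}. children n p m)"
    using parent_functionsD[OF assms] unfolding nonroots_def children_def by fastforce
  moreover have "card (\<Union>m\<in>{1..n}. children n p m) = (\<Sum>m\<in>{1..n}. card (children n p m))"
    by (rule card_UN_disjoint) (auto simp: children_def)
  ultimately show ?thesis
    by simp
qed

lemma card_nonroots_le: "card (nonroots n p) \<le> n"
proof -
  have "nonroots n p \<subseteq> {1..n}"
    unfolding nonroots_def by blast
  from card_mono[OF finite_atLeastAtMost this] show ?thesis
    by simp
qed

lemma sum_weight_fun_upd:
  assumes p: "p \<in> parent_functions n"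
  shows "(\<Sum>y\<le>n. if card (nonroots (Suc n) (p(Suc n := y))) = e then weight (Suc n) (p(Suc n := y)) else 0) =
    (if card (nonroots n p) = e then weight n p else 0) +
    (if Suc (card (nonroots n p)) = e then (n + card (nonroots n p)) * weight n p else 0)"
    (is "(\<Sum>y\<le>n. ?w y) = _")
proof -
  have "(\<Sum>y\<le>n. ?w y) = ?w 0 + (\<Sum>y\<in>{1..n}. ?w y)"
    by (simp add: atMost_atLeast0 sum.atLeast_Suc_atMost)
  also have "?w 0 = (if card (nonroots n p) = e then weight n p else 0)"
    using weight_fun_upd[OF p le0] card_nonroots_fun_upd[of n p 0] by simp
  also have "(\<Sum>y\<in>{1..n}. ?w y)
      = (\<Sum>y\<in>{1..n}. if Suc (card (nonroots n p)) = e then Suc (card (children n p y)) * weight n p else 0)"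
    using weight_fun_upd[OF p] card_nonroots_fun_upd[of n p] by (intro sum.cong) simp_all
  also have "\<dots> = (if Suc (card (nonroots n p)) = e
      then (\<Sum>y\<in>{1..n}. Suc (card (children n p y))) * weight n p else 0)"
    by (simp add: sum_distrib_right)
  also have "(\<Sum>y\<in>{1..n}. Suc (card (children n p y))) = n + card (nonroots n p)"
    using sum_card_children[OF p] by (simp add: sum_Suc)
  finally show ?thesis .
qed

lemma graded_weight_Suc:
  "graded_weight (Suc n) e =
     (\<Sum>p\<in>parent_functions n.
        (if card (nonroots n p) = e then weight n p else 0) +
        (if Suc (card (nonroots n p)) = e then (n + card (nonroots n p)) * weight n p else 0))"
proof -
  let ?w = "\<lambda>q. if card (nonroots (Suc n) q) = e then weight (Suc n) q else 0"
  have "graded_weight (Suc n) e = (\<Sum>(y, p)\<in>{..n} \<times> parent_functions n. ?w (p(Suc n := y)))"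
    unfolding graded_weight_def parent_functions_Suc sum.reindex[OF inj_on_parent_functions_Suc]
    by (simp add: case_prod_unfold)
  also have "\<dots> = (\<Sum>p\<in>parent_functions n. \<Sum>y\<le>n. ?w (p(Suc n := y)))"
    by (simp add: sum.cartesian_product[symmetric] sum.swap[of _ "{..n}"])
  finally show ?thesis
    by (simp add: sum_weight_fun_upd)
qed

lemma graded_weight_eq_bessel_coeff: "graded_weight n e = bessel_coeff n e"
proof (induction n arbitrary: e)
  case 0
  then show ?case
    by (simp add: graded_weight_def parent_functions_def nonroots_def weight_def)
next
  case (Suc n)
  show ?case
  proof (cases e)
    case 0
    then show ?thesis
      using Suc.IH[of 0] unfolding graded_weight_Suc by (simp add: graded_weight_def)
  next
    case (Suc e')
    have "(\<Sum>p\<in>parent_functions n. if Suc (card (nonroots n p)) = e then (n + card (nonroots n p)) * weight n p else 0)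
        = (n + e') * graded_weight n e'"
      unfolding graded_weight_def sum_distrib_left Suc by (rule sum.cong) simp_all
    then have "graded_weight (Suc n) e = graded_weight n e + (n + e') * graded_weight n e'"
      unfolding graded_weight_Suc sum.distrib by (simp add: graded_weight_def)
    then show ?thesis
      using Suc.IH Suc by simp
  qed
qed

lemma sum_weight_eq_bessel_sum: "(\<Sum>p\<in>parent_functions n. weight n p) = bessel_sum n"
proof -
  have "(\<Sum>p\<in>parent_functions n. weight n p)
      = (\<Sum>p\<in>parent_functions n. \<Sum>e\<le>n. if card (nonroots n p) = e then weight n p else 0)"
    using card_nonroots_le by (simp add: sum.delta)
  also have "\<dots> = (\<Sum>e\<le>n. graded_weight n e)"
    unfolding graded_weight_def by (rule sum.swap)
  finally show ?thesis
    by (simp add: graded_weight_eq_bessel_coeff bessel_sum_def)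
qed

lemma lc_eq_bessel_sum: "lc n = bessel_sum n"
  unfolding lc_eq_sum_linked_partitions sum_linked_partitions_eq_sum_weight sum_weight_eq_bessel_sum ..

theorem theorem4p7:
  shows "lc 1 = 1 \<and> lc 2 = 2 \<and>
         (\<forall>n::nat. n \<ge> 3 \<longrightarrow> lc n = (2 * n - 3) * lc (n - 1) + lc (n - 2))"
proof (intro conjI allI impI)
  show "lc 1 = 1" "lc 2 = 2"
    by (simp_all add: lc_eq_bessel_sum bessel_sum_def numeral_2_eq_2)
  fix n :: nat assume "n \<ge> 3"
  then obtain m where n: "n = m + 2"
    by (intro that[of "n - 2"]) simp
  show "lc n = (2 * n - 3) * lc (n - 1) + lc (n - 2)"
    unfolding lc_eq_bessel_sum n using bessel_sum_three_term[of m] by simp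
qed

end
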